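(* Let $G_{\max}=(V,E_{\max})$ be a finite, simple, connected, undirected graph, and let $\lambda',\mu',\gamma'>0$ with $\frac{\lambda'}{\mu'}>1$ and $0<\gamma'\le 1$ (Regime III). For a network state $\mathbf{A}$ (a subset $E(\mathbf{A})\subseteq E_{\max}$ of closed edges) let $g(E(\mathbf{A}))$ be the number of $C_3$ subgraphs (triangles) plus the number of $P_4$ subgraphs (paths with 4 vertices) formed by $E(\mathbf{A})$, and call a maximizer of $\pi(\mathbf{A})\propto(\lambda'/\mu')^{|E(\mathbf{A})|}\gamma'^{\,g(E(\mathbf{A}))}$ over all network states a most-probable network (for POD-DBP). If $\lambda'\gamma'<\mu'$, then the most-probable networks are exactly the network states $\mathbf{A}^*$ with $g(E(\mathbf{A}^* ))=0$ and $|E(\mathbf{A}^* )|$ maximum among such states; equivalently, $E(\mathbf{A}^* )$ is a maximum star matching of $G_{\max}$.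
   Context: A star graph is a graph consisting of a center vertex joined to all other vertices, with no other edges. A star matching of a graph $G=(V,E)$ is a subset of $E$ whose edges form a collection of vertex-disjoint (disconnected) star graphs; a maximum star matching is a star matching with the largest possible number of edges. *)

theory Defs
  imports Complex_Main
begin

definition simple_graph :: "'a set \<Rightarrow> 'a set set \<Rightarrow> bool" where
  "simple_graph V E \<longleftrightarrow> finite V \<and> (\<forall>e\<in>E. e \<subseteq> V \<and> card e = 2)"

definition adj :: "'a set set \<Rightarrow> ('a \<times> 'a) set" where
  "adj E = {(u, v). {u, v} \<in> E}"

definition connected_graph :: "'a set \<Rightarrow> 'a set set \<Rightarrow> bool" where
  "connected_graph V E \<longleftrightarrow> (\<forall>u\<in>V. \<forall>v\<in>V. (u, v) \<in> (adj E)\<^sup>*)"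

definition num_C3 :: "'a set set \<Rightarrow> nat" where
  "num_C3 F = card {{{a, b}, {b, c}, {a, c}} | a b c.
      a \<noteq> b \<and> b \<noteq> c \<and> a \<noteq> c \<and> {a, b} \<in> F \<and> {b, c} \<in> F \<and> {a, c} \<in> F}"

text \<open>Number of P4 subgraphs (paths on 4 vertices) of the graph formed by F,
  each subgraph counted once as its set of three edges.\<close>
definition num_P4 :: "'a set set \<Rightarrow> nat" where
  "num_P4 F = card {{{a, b}, {b, c}, {c, d}} | a b c d.
      distinct [a, b, c, d] \<and> {a, b} \<in> F \<and> {b, c} \<in> F \<and> {c, d} \<in> F}"

definition g_count :: "'a set set \<Rightarrow> nat" where
  "g_count F = num_C3 F + num_P4 F"

definition pod_weight :: "real \<Rightarrow> real \<Rightarrow> real \<Rightarrow> 'a set set \<Rightarrow> real" where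
  "pod_weight lam mu gam F = (lam / mu) ^ card F * gam ^ g_count F"

definition most_probable :: "real \<Rightarrow> real \<Rightarrow> real \<Rightarrow> 'a set set \<Rightarrow> 'a set set \<Rightarrow> bool" where
  "most_probable lam mu gam Emax A \<longleftrightarrow> A \<subseteq> Emax \<and>
     (\<forall>B. B \<subseteq> Emax \<longrightarrow> pod_weight lam mu gam B \<le> pod_weight lam mu gam A)"

definition is_star :: "'a set set \<Rightarrow> bool" where
  "is_star S \<longleftrightarrow> S \<noteq> {} \<and> (\<exists>c. \<forall>e\<in>S. c \<in> e)"

definition star_matching :: "'a set set \<Rightarrow> 'a set set \<Rightarrow> bool" where
  "star_matching E F \<longleftrightarrow> F \<subseteq> E \<and>
     (\<exists>P. \<Union>P = F \<and> (\<forall>S\<in>P. is_star S) \<and>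
          (\<forall>S\<in>P. \<forall>T\<in>P. S \<noteq> T \<longrightarrow> \<Union>S \<inter> \<Union>T = {}))"

definition max_star_matching :: "'a set set \<Rightarrow> 'a set set \<Rightarrow> bool" where
  "max_star_matching E F \<longleftrightarrow> star_matching E F \<and>
     (\<forall>F'. star_matching E F' \<longrightarrow> card F' \<le> card F)"

end

theory Submission
  imports Defs
begin

text \<open>Since \<open>\<lambda>'\<gamma>' < \<mu>'\<close>, deleting an edge that lies in a triangle or a \<open>P\<^sub>4\<close> loses a factor
  \<open>\<lambda>'/\<mu>'\<close> but gains at least a factor \<open>1/\<gamma>'\<close>, so the weight strictly increases. Repeating this,
  every network state is dominated by a subset with \<open>g = 0\<close>, and among those the weight is
  \<open>(\<lambda>'/\<mu>')\<^bsup>|E|\<^esup>\<close>, increasing in the number of edges. Finally, an edge set has neither triangles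
  nor \<open>P\<^sub>4\<close>s exactly when it is a star matching: without \<open>P\<^sub>4\<close>s, sharing a vertex is transitive
  on edges, and without triangles each class of this equivalence has a common centre.\<close>

definition triangles :: "'a set set \<Rightarrow> 'a set set set" where
  "triangles F = {{{a, b}, {b, c}, {a, c}} | a b c.
      a \<noteq> b \<and> b \<noteq> c \<and> a \<noteq> c \<and> {a, b} \<in> F \<and> {b, c} \<in> F \<and> {a, c} \<in> F}"

definition paths4 :: "'a set set \<Rightarrow> 'a set set set" where
  "paths4 F = {{{a, b}, {b, c}, {c, d}} | a b c d.
      distinct [a, b, c, d] \<and> {a, b} \<in> F \<and> {b, c} \<in> F \<and> {c, d} \<in> F}"

lemma g_count_eq_card: "g_count F = card (triangles F) + card (paths4 F)"
  unfolding g_count_def num_C3_def num_P4_def triangles_def paths4_def by simp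

lemma triangles_subset: "X \<in> triangles F \<Longrightarrow> X \<subseteq> F"
  unfolding triangles_def by auto

lemma paths4_subset: "X \<in> paths4 F \<Longrightarrow> X \<subseteq> F"
  unfolding paths4_def by auto

lemma triangles_mono: "F \<subseteq> G \<Longrightarrow> triangles F \<subseteq> triangles G"
  unfolding triangles_def by blast

lemma paths4_mono: "F \<subseteq> G \<Longrightarrow> paths4 F \<subseteq> paths4 G"
  unfolding paths4_def by blast

lemma finite_triangles: "finite F \<Longrightarrow> finite (triangles F)"
  by (rule finite_subset[of _ "Pow F"]) (auto dest: triangles_subset)

lemma finite_paths4: "finite F \<Longrightarrow> finite (paths4 F)"
  by (rule finite_subset[of _ "Pow F"]) (auto dest: paths4_subset)

lemma g_count_eq_0_iff: "finite F \<Longrightarrow> g_count F = 0 \<longleftrightarrow> triangles F = {} \<and> paths4 F = {}"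
  by (simp add: g_count_eq_card finite_triangles finite_paths4)

lemma card_subgraphs_remove_edge_less:
  fixes H :: "'a set set \<Rightarrow> 'a set set set"
  assumes mono: "\<And>F G. F \<subseteq> G \<Longrightarrow> H F \<subseteq> H G"
    and subset: "\<And>X F. X \<in> H F \<Longrightarrow> X \<subseteq> F"
    and "finite (H F)" "X \<in> H F" "e \<in> X"
  shows "card (H (F - {e})) < card (H F)"
proof (rule psubset_card_mono)
  have "X \<notin> H (F - {e})" using subset \<open>e \<in> X\<close> by blast
  then show "H (F - {e}) \<subset> H F" using mono[of "F - {e}" F] \<open>X \<in> H F\<close> by blast
qed fact

lemma g_count_remove_edge_less:
  assumes "finite F" "g_count F > 0"
  obtains e where "e \<in> F" "g_count (F - {e}) < g_count F"
proof -
  have fin: "finite (triangles F)" "finite (paths4 F)"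
    using assms(1) by (auto simp: finite_triangles finite_paths4)
  have le: "card (triangles (F - {e})) \<le> card (triangles F)"
    "card (paths4 (F - {e})) \<le> card (paths4 F)" for e
    by (auto intro!: card_mono fin triangles_mono paths4_mono)
  from assms(2) consider X where "X \<in> triangles F" | X where "X \<in> paths4 F"
    by (auto simp: g_count_eq_card card_gt_0_iff)
  then show thesis
  proof cases
    case (1 X)
    then obtain e where e: "e \<in> X" unfolding triangles_def by auto
    have "card (triangles (F - {e})) < card (triangles F)"
      using triangles_mono triangles_subset fin(1) 1 e by (rule card_subgraphs_remove_edge_less)
    then show thesis
      using le(2)[of e] 1 e by (intro that[of e]) (auto simp: g_count_eq_card dest: triangles_subset)
  next
    case (2 X)
    then obtain e where e: "e \<in> X" unfolding paths4_def by auto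
    have "card (paths4 (F - {e})) < card (paths4 F)"
      using paths4_mono paths4_subset fin(2) 2 e by (rule card_subgraphs_remove_edge_less)
    then show thesis
      using le(1)[of e] 2 e by (intro that[of e]) (auto simp: g_count_eq_card dest: paths4_subset)
  qed
qed

lemma pod_weight_remove_edge_gt:
  assumes "finite F" "e \<in> F" "g_count (F - {e}) < g_count F"
    and "lam > 0" "mu > 0" "gam > 0" "gam \<le> 1" "lam * gam < mu"
  shows "pod_weight lam mu gam F < pod_weight lam mu gam (F - {e})"
proof -
  define r where "r = lam / mu"
  have "r > 0" "r * gam < 1" using assms by (auto simp: r_def field_simps)
  have card: "card F = Suc (card (F - {e}))" using card_Suc_Diff1[OF assms(1,2)] by simp
  have "gam ^ g_count F \<le> gam ^ Suc (g_count (F - {e}))"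
    using assms(3,6,7) by (intro power_decreasing) auto
  then have "pod_weight lam mu gam F \<le> r ^ card F * gam ^ Suc (g_count (F - {e}))"
    unfolding pod_weight_def r_def[symmetric] using \<open>r > 0\<close> by (intro mult_left_mono) auto
  also have "\<dots> = (r * gam) * pod_weight lam mu gam (F - {e})"
    unfolding pod_weight_def r_def[symmetric] card by simp
  also have "\<dots> < pod_weight lam mu gam (F - {e})"
    using \<open>r * gam < 1\<close> \<open>r > 0\<close> \<open>gam > 0\<close> by (simp add: pod_weight_def r_def[symmetric])
  finally show ?thesis .
qed

lemma exists_g_count_free_subset_weight_ge:
  assumes "finite F" "lam > 0" "mu > 0" "gam > 0" "gam \<le> 1" "lam * gam < mu"
  obtains F' where "F' \<subseteq> F" "g_count F' = 0"
    "pod_weight lam mu gam F \<le> pod_weight lam mu gam F'"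
    "g_count F > 0 \<longrightarrow> pod_weight lam mu gam F < pod_weight lam mu gam F'"
  using assms(1)
proof (induction "card F" arbitrary: F thesis rule: less_induct)
  case less
  show ?case
  proof (cases "g_count F = 0")
    case True
    then show ?thesis by (intro less.prems(1)[of F]) auto
  next
    case False
    then obtain e where e: "e \<in> F" "g_count (F - {e}) < g_count F"
      using g_count_remove_edge_less[OF less.prems(2)] by auto
    have gt: "pod_weight lam mu gam F < pod_weight lam mu gam (F - {e})"
      using pod_weight_remove_edge_gt[OF less.prems(2) e] assms(2-) .
    obtain F' where "F' \<subseteq> F - {e}" "g_count F' = 0"
      "pod_weight lam mu gam (F - {e}) \<le> pod_weight lam mu gam F'"
      using less.hyps[OF card_Diff1_less[OF less.prems(2) e(1)]] less.prems(2) by blast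
    then show ?thesis using gt by (intro less.prems(1)[of F']) auto
  qed
qed

lemma pod_weight_le_iff_card_le:
  assumes "g_count F = 0" "g_count G = 0" "lam / mu > 1"
  shows "pod_weight lam mu gam F \<le> pod_weight lam mu gam G \<longleftrightarrow> card F \<le> card G"
  using assms by (simp add: pod_weight_def)

lemma most_probable_iff_max_g_count_free:
  assumes "finite E" "A \<subseteq> E" "lam > 0" "mu > 0" "gam > 0" "gam \<le> 1"
    "lam / mu > 1" "lam * gam < mu"
  shows "most_probable lam mu gam E A \<longleftrightarrow>
           g_count A = 0 \<and> (\<forall>B. B \<subseteq> E \<and> g_count B = 0 \<longrightarrow> card B \<le> card A)"
proof
  assume "most_probable lam mu gam E A"
  then have le: "pod_weight lam mu gam B \<le> pod_weight lam mu gam A" if "B \<subseteq> E" for B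
    using that unfolding most_probable_def by blast
  have g0: "g_count A = 0"
  proof (rule ccontr)
    assume "g_count A \<noteq> 0"
    obtain A' where "A' \<subseteq> A" "g_count A' = 0"
      "pod_weight lam mu gam A \<le> pod_weight lam mu gam A'"
      "g_count A > 0 \<longrightarrow> pod_weight lam mu gam A < pod_weight lam mu gam A'"
      by (rule exists_g_count_free_subset_weight_ge[OF finite_subset[OF assms(2,1)] assms(3-6,8)])
    with le[of A'] assms(2) \<open>g_count A \<noteq> 0\<close> show False by auto
  qed
  moreover have "card B \<le> card A" if "B \<subseteq> E" "g_count B = 0" for B
    using le[OF that(1)] pod_weight_le_iff_card_le[OF that(2) g0 assms(7)] by simp
  ultimately show "g_count A = 0 \<and> (\<forall>B. B \<subseteq> E \<and> g_count B = 0 \<longrightarrow> card B \<le> card A)"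
    by blast
next
  assume max: "g_count A = 0 \<and> (\<forall>B. B \<subseteq> E \<and> g_count B = 0 \<longrightarrow> card B \<le> card A)"
  have "pod_weight lam mu gam B \<le> pod_weight lam mu gam A" if B: "B \<subseteq> E" for B
  proof -
    obtain B' where B': "B' \<subseteq> B" "g_count B' = 0"
      "pod_weight lam mu gam B \<le> pod_weight lam mu gam B'"
      "g_count B > 0 \<longrightarrow> pod_weight lam mu gam B < pod_weight lam mu gam B'"
      by (rule exists_g_count_free_subset_weight_ge[OF finite_subset[OF B assms(1)] assms(3-6,8)])
    have "card B' \<le> card A" using max B'(1,2) B by blast
    then have "pod_weight lam mu gam B' \<le> pod_weight lam mu gam A"
      using pod_weight_le_iff_card_le[OF B'(2) conjunct1[OF max] assms(7)] by simp
    with B'(3) show ?thesis by linarith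
  qed
  then show "most_probable lam mu gam E A" using assms(2) unfolding most_probable_def by blast
qed

lemma star_matching_no_triangles_paths4:
  assumes "star_matching E F"
  shows "triangles F = {} \<and> paths4 F = {}"
proof -
  from assms obtain P where P: "\<Union>P = F" "\<forall>S\<in>P. is_star S"
    "\<forall>S\<in>P. \<forall>T\<in>P. S \<noteq> T \<longrightarrow> \<Union>S \<inter> \<Union>T = {}"
    unfolding star_matching_def by blast
  have in_star: "\<exists>S\<in>P. f \<in> S" if "f \<in> F" for f using P(1) that by blast
  have same_star: "S = T" if "S \<in> P" "T \<in> P" "f \<in> S" "f' \<in> T" "v \<in> f" "v \<in> f'" for S T f f' v
    using P(3) that by blast
  have no_triangle: False
    if tri: "a \<noteq> b" "b \<noteq> c" "a \<noteq> c" "{a, b} \<in> F" "{b, c} \<in> F" "{a, c} \<in> F"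
    for a b c
  proof -
    obtain S1 S2 S3 where S: "S1 \<in> P" "{a, b} \<in> S1" "S2 \<in> P" "{b, c} \<in> S2" "S3 \<in> P" "{a, c} \<in> S3"
      using in_star tri(4-6) by meson
    have "S1 = S2" "S1 = S3" using same_star[of _ _ _ _ b] same_star[of _ _ _ _ a] S by auto
    then obtain x where "x \<in> {a, b}" "x \<in> {b, c}" "x \<in> {a, c}"
      using P(2) S unfolding is_star_def by metis
    then show False using tri by auto
  qed
  have no_path4: False
    if path: "distinct [a, b, c, d]" "{a, b} \<in> F" "{b, c} \<in> F" "{c, d} \<in> F" for a b c d
  proof -
    obtain S1 S2 S3 where S: "S1 \<in> P" "{a, b} \<in> S1" "S2 \<in> P" "{b, c} \<in> S2" "S3 \<in> P" "{c, d} \<in> S3"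
      using in_star path(2-4) by meson
    have "S1 = S2" "S2 = S3" using same_star[of _ _ _ _ b] same_star[of _ _ _ _ c] S by auto
    then obtain x where "x \<in> {a, b}" "x \<in> {c, d}"
      using P(2) S unfolding is_star_def by metis
    then show False using path by auto
  qed
  show ?thesis unfolding triangles_def paths4_def using no_triangle no_path4 by blast
qed

definition touching_edges :: "'a set set \<Rightarrow> 'a set \<Rightarrow> 'a set set" where
  "touching_edges F e = {f \<in> F. e \<inter> f \<noteq> {}}"

lemma self_in_touching_edges: "e \<in> F \<Longrightarrow> e \<noteq> {} \<Longrightarrow> e \<in> touching_edges F e"
  unfolding touching_edges_def by simp

lemma edge_with_endpoint: "card e = 2 \<Longrightarrow> u \<in> e \<Longrightarrow> \<exists>x. e = {u, x} \<and> x \<noteq> u"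
  by (auto simp: card_2_iff)

lemma touching_trans_if_no_paths4:
  assumes F2: "\<forall>f\<in>F. card f = 2" and "paths4 F = {}" "e \<in> F" "f \<in> F" "h \<in> F"
    and "e \<inter> f \<noteq> {}" "f \<inter> h \<noteq> {}"
  shows "e \<inter> h \<noteq> {}"
proof
  assume eh: "e \<inter> h = {}"
  obtain u where u: "u \<in> e" "u \<in> f" using assms(6) by blast
  obtain w where w: "w \<in> f" "w \<in> h" using assms(7) by blast
  have "u \<noteq> w" using u w eh by blast
  obtain x where e: "e = {u, x}" "x \<noteq> u" using edge_with_endpoint[OF bspec[OF F2 assms(3)] u(1)] by blast
  obtain y where h: "h = {w, y}" "y \<noteq> w" using edge_with_endpoint[OF bspec[OF F2 assms(5)] w(2)] by blast
  obtain z where f: "f = {u, z}" using edge_with_endpoint[OF bspec[OF F2 assms(4)] u(2)] by blast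
  have "z = w" using f w(1) \<open>u \<noteq> w\<close> by blast
  have "distinct [x, u, w, y]" using e h eh \<open>u \<noteq> w\<close> by auto
  moreover have "{x, u} \<in> F" using assms(3) e(1) by (simp add: insert_commute)
  ultimately have "{{x, u}, {u, w}, {w, y}} \<in> paths4 F"
    using assms(4,5) f h(1) \<open>z = w\<close> unfolding paths4_def by blast
  then show False using assms(2) by simp
qed

lemma is_star_touching_edges:
  assumes F2: "\<forall>f\<in>F. card f = 2" and "triangles F = {}" "paths4 F = {}" "e \<in> F"
  shows "is_star (touching_edges F e)"
proof -
  obtain a b where ab: "e = {a, b}" "a \<noteq> b"
    using bspec[OF F2 assms(4)] by (auto simp: card_2_iff)
  have "(\<forall>f\<in>touching_edges F e. a \<in> f) \<or> (\<forall>f\<in>touching_edges F e. b \<in> f)"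
  proof (rule ccontr)
    assume "\<not> ?thesis"
    then obtain f1 f2 where "f1 \<in> touching_edges F e" "a \<notin> f1" "f2 \<in> touching_edges F e" "b \<notin> f2"
      by blast
    then have f1: "f1 \<in> F" "b \<in> f1" "a \<notin> f1" and f2: "f2 \<in> F" "a \<in> f2" "b \<notin> f2"
      using ab unfolding touching_edges_def by auto
    obtain y where y: "f1 = {b, y}" "y \<noteq> b"
      using edge_with_endpoint[OF bspec[OF F2 f1(1)] f1(2)] by blast
    obtain x where x: "f2 = {a, x}" "x \<noteq> a"
      using edge_with_endpoint[OF bspec[OF F2 f2(1)] f2(2)] by blast
    have "y \<noteq> a" "x \<noteq> b" using f1(3) f2(3) x(1) y(1) by auto
    have aF: "{a, x} \<in> F" and bF: "{b, y} \<in> F" and "{a, b} \<in> F"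
      using f1(1) f2(1) x(1) y(1) ab assms(4) by auto
    show False
    proof (cases "x = y")
      case True
      have "{{a, b}, {b, x}, {a, x}} \<in> triangles F"
        unfolding triangles_def using \<open>{a, b} \<in> F\<close> aF bF[unfolded True[symmetric]]
          \<open>x \<noteq> a\<close> \<open>x \<noteq> b\<close> ab(2) by blast
      then show False using assms(2) by simp
    next
      case False
      have "distinct [x, a, b, y]" using False \<open>x \<noteq> a\<close> \<open>x \<noteq> b\<close> \<open>y \<noteq> a\<close> y(2) ab(2) by auto
      moreover have "{x, a} \<in> F" using aF by (simp add: insert_commute)
      ultimately have "{{x, a}, {a, b}, {b, y}} \<in> paths4 F"
        unfolding paths4_def using \<open>{a, b} \<in> F\<close> bF by blast
      then show False using assms(3) by simp
    qed
  qed
  moreover have "e \<in> touching_edges F e" using self_in_touching_edges assms(4) ab by blast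
  ultimately show ?thesis unfolding is_star_def by blast
qed

lemma touching_edges_eq_if_touching:
  assumes F2: "\<forall>f\<in>F. card f = 2" and "paths4 F = {}" "e1 \<in> F" "e2 \<in> F" "e1 \<inter> e2 \<noteq> {}"
  shows "touching_edges F e1 = touching_edges F e2"
proof -
  have "e2 \<inter> e1 \<noteq> {}" using assms(5) by (simp add: Int_commute)
  have "e1 \<inter> g \<noteq> {} \<longleftrightarrow> e2 \<inter> g \<noteq> {}" if "g \<in> F" for g
    using touching_trans_if_no_paths4[OF F2 assms(2) assms(3) assms(4) that assms(5)]
      touching_trans_if_no_paths4[OF F2 assms(2) assms(4) assms(3) that \<open>e2 \<inter> e1 \<noteq> {}\<close>]
    by blast
  then show ?thesis unfolding touching_edges_def by blast
qed

lemma star_matching_if_no_triangles_paths4: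
  assumes E2: "\<forall>e\<in>E. card e = 2" and "F \<subseteq> E" "triangles F = {}" "paths4 F = {}"
  shows "star_matching E F"
proof -
  have F2: "\<forall>f\<in>F. card f = 2" using E2 assms(2) by blast
  have nonempty: "f \<noteq> {}" if "f \<in> F" for f using bspec[OF F2 that] by auto
  define P where "P = touching_edges F ` F"
  have "\<Union>P \<subseteq> F" unfolding P_def touching_edges_def by blast
  moreover have "F \<subseteq> \<Union>P" unfolding P_def using self_in_touching_edges nonempty by blast
  moreover have "\<forall>S\<in>P. is_star S"
    using is_star_touching_edges[OF F2 assms(3,4)] unfolding P_def by blast
  moreover have "\<Union>S \<inter> \<Union>T = {}" if ST: "S \<in> P" "T \<in> P" "S \<noteq> T" for S T
  proof (rule ccontr)
    assume "\<Union>S \<inter> \<Union>T \<noteq> {}"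
    then obtain f1 f2 where f: "f1 \<in> S" "f2 \<in> T" "f1 \<inter> f2 \<noteq> {}" by blast
    obtain e1 e2 where e: "e1 \<in> F" "S = touching_edges F e1" "e2 \<in> F" "T = touching_edges F e2"
      using ST(1,2) unfolding P_def by blast
    have f1: "f1 \<in> F" "e1 \<inter> f1 \<noteq> {}" and f2: "f2 \<in> F" "e2 \<inter> f2 \<noteq> {}"
      using f(1,2) e unfolding touching_edges_def by auto
    have "S = touching_edges F f1"
      using touching_edges_eq_if_touching[OF F2 assms(4) e(1) f1] e(2) by simp
    also have "\<dots> = touching_edges F f2"
      using touching_edges_eq_if_touching[OF F2 assms(4) f1(1) f2(1) f(3)] .
    also have "\<dots> = T"
      using touching_edges_eq_if_touching[OF F2 assms(4) e(3) f2] e(4) by simp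
    finally show False using ST(3) by contradiction
  qed
  ultimately show ?thesis unfolding star_matching_def using assms(2) by (intro conjI exI[of _ P]) auto
qed

lemma finite_edges: "simple_graph V E \<Longrightarrow> finite E"
  unfolding simple_graph_def by (meson Pow_iff finite_Pow_iff finite_subset subsetI)

lemma star_matching_iff_g_count_eq_0:
  assumes "simple_graph V E"
  shows "star_matching E F \<longleftrightarrow> F \<subseteq> E \<and> g_count F = 0"
proof -
  have "finite F" if "F \<subseteq> E" using finite_subset[OF that finite_edges[OF assms]] .
  moreover have "\<forall>e\<in>E. card e = 2" using assms unfolding simple_graph_def by blast
  ultimately show ?thesis
    using star_matching_no_triangles_paths4 star_matching_if_no_triangles_paths4 g_count_eq_0_iff
    unfolding star_matching_def by metis
qed

theorem theorem8:
  fixes V :: "'a set" and Emax :: "'a set set" and lam mu gam :: real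
  assumes "simple_graph V Emax" and "connected_graph V Emax"
    and "lam > 0" and "mu > 0" and "gam > 0"
    and "lam / mu > 1" and "gam \<le> 1"
    and "lam * gam < mu"
    and "A \<subseteq> Emax"
  shows "(most_probable lam mu gam Emax A \<longleftrightarrow>
           (g_count A = 0 \<and> (\<forall>B. B \<subseteq> Emax \<and> g_count B = 0 \<longrightarrow> card B \<le> card A)))
       \<and> (most_probable lam mu gam Emax A \<longleftrightarrow> max_star_matching Emax A)"
proof -
  have "most_probable lam mu gam Emax A \<longleftrightarrow>
      g_count A = 0 \<and> (\<forall>B. B \<subseteq> Emax \<and> g_count B = 0 \<longrightarrow> card B \<le> card A)"
    using most_probable_iff_max_g_count_free[OF finite_edges[OF assms(1)] assms(9)] assms(3-8)
    by blast
  moreover have "max_star_matching Emax A \<longleftrightarrow>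
      g_count A = 0 \<and> (\<forall>B. B \<subseteq> Emax \<and> g_count B = 0 \<longrightarrow> card B \<le> card A)"
    unfolding max_star_matching_def star_matching_iff_g_count_eq_0[OF assms(1)] using assms(9) by blast
  ultimately show ?thesis by blast
qed

end
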